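(* Define Knuth's up-arrow operations on positive integers by $a\uparrow^1 b=a^b$, $a\uparrow^k 1=a$ and $a\uparrow^{k}(b+1)=a\uparrow^{k-1}(a\uparrow^{k}b)$ for $k\ge2$, $b\ge1$. Let $g_1=3\uparrow^4 3$ and $g_{i}=3\uparrow^{g_{i-1}}3$ for $i\ge2$. Then the sequence $(g_i)_{i\ge1}$ converges in the ring $\mathbb{Z}_{10}$ of $10$-adic integers, the sequence $(3\uparrow\uparrow j)_{j\ge1}$ (where $3\uparrow\uparrow j=3\uparrow^2 j$) also converges in $\mathbb{Z}_{10}$, and the two limits coincide: $\lim_{i\to\infty}g_i=\lim_{j\to\infty}3\uparrow\uparrow j$ in $\mathbb{Z}_{10}$.
   Context: $\mathbb{Z}_{10}=\varprojlim_m\mathbb{Z}/10^m\mathbb{Z}$ is the ring of $10$-adic integers; a sequence of integers converges in $\mathbb{Z}_{10}$ iff for every $m$ its last $m$ decimal digits are eventually constant. Graham's number is $G=g_{64}$. *)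

theory Defs
  imports Main
begin

text \<open>Knuth up-arrow a \<up>^k b for k \<ge> 1, b \<ge> 1. Values at k = 0 or b = 0
  are outside the domain of the paper's definition and are fixed by arbitrary
  conventions (never used in the statement).\<close>
fun uparrow :: "nat \<Rightarrow> nat \<Rightarrow> nat \<Rightarrow> nat" where
  "uparrow a 0 b = a * b"
| "uparrow a (Suc 0) b = a ^ b"
| "uparrow a (Suc (Suc k)) 0 = 1"
| "uparrow a (Suc (Suc k)) (Suc 0) = a"
| "uparrow a (Suc (Suc k)) (Suc (Suc b)) =
     uparrow a (Suc k) (uparrow a (Suc (Suc k)) (Suc b))"

text \<open>Graham's sequence: graham 1 = 3\<up>^4 3, graham (i+1) = 3 \<up>^(graham i) 3.
  (graham 0 is an unused convention, set to 4 so that graham 1 = 3\<up>^4 3.)\<close>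
fun graham :: "nat \<Rightarrow> nat" where
  "graham 0 = 4"
| "graham (Suc i) = uparrow 3 (graham i) 3"

text \<open>Elements of Z_10 = lim Z/10^m Z represented as coherent digit-residue
  sequences x :: nat \<Rightarrow> nat, x m = residue mod 10^m.\<close>
definition converges_10adic :: "(nat \<Rightarrow> nat) \<Rightarrow> bool" where
  "converges_10adic s \<longleftrightarrow>
     (\<forall>m. \<exists>N. \<forall>n\<ge>N. s n mod 10 ^ m = s N mod 10 ^ m)"

definition lim_10adic :: "(nat \<Rightarrow> nat) \<Rightarrow> nat \<Rightarrow> nat" where
  "lim_10adic s m =
     s (LEAST N. \<forall>n\<ge>N. s n mod 10 ^ m = s N mod 10 ^ m) mod 10 ^ m"

end

theory Submission
  imports Defs "HOL-Number_Theory.Cong"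
begin

text \<open>For k \<ge> 2 the number 3\<up>\<up>...\<up> b (k arrows) is itself a tower of threes, whose height
  grows with k and b; hence g(i) is a tower 3\<up>\<up>h with h \<ge> i, so both sequences run through
  the towers. The towers converge 10-adically because 3^(4*10^m) = 1 (mod 4*10^(m+1)): a
  congruence of exponents modulo 4*10^m lifts to a congruence of the powers of 3 modulo
  4*10^(m+1). As every tower is 3 modulo 4, induction on m gives
  3\<up>\<up>(j+1) = 3\<up>\<up>j (mod 4*10^m) for j \<ge> m.\<close>

lemma lim_10adic_eqI:
  assumes "\<forall>n\<ge>N. s n mod 10 ^ m = c"
  shows "lim_10adic s m = c"
proof -
  define stable where "stable K \<longleftrightarrow> (\<forall>n\<ge>K. s n mod 10 ^ m = s K mod 10 ^ m)" for K
  define L where "L = Least stable"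
  have "stable N"
    using assms by (simp add: stable_def)
  then have "stable L"
    unfolding L_def by (rule LeastI)
  then have "s (max L N) mod 10 ^ m = s L mod 10 ^ m"
    unfolding stable_def using max.cobounded1 by blast
  moreover have "s (max L N) mod 10 ^ m = c"
    using assms max.cobounded2 by blast
  moreover have "lim_10adic s m = s L mod 10 ^ m"
    unfolding lim_10adic_def L_def stable_def ..
  ultimately show ?thesis
    by simp
qed

lemma converges_10adic_with_limit:
  assumes "\<And>m. \<exists>N. \<forall>n\<ge>N. s n mod 10 ^ m = c m"
  shows "converges_10adic s \<and> lim_10adic s = c"
proof
  show "converges_10adic s"
    unfolding converges_10adic_def by (metis assms order_refl)
  show "lim_10adic s = c"
    using assms lim_10adic_eqI by blast
qed

lemma cong_one_power_lift:
  fixes a q :: int and p :: nat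
  assumes "int p dvd q" and "[a = 1] (mod q)"
  shows "[a ^ p = 1] (mod int p * q)"
proof -
  have "[(\<Sum>i<p. a ^ i) = (\<Sum>i<p. 1 ^ i)] (mod q)"
    by (intro cong_sum cong_pow assms(2))
  then have "[(\<Sum>i<p. a ^ i) = int p] (mod int p)"
    using assms(1) by (auto intro: cong_dvd_modulus)
  then have "int p dvd (\<Sum>i<p. a ^ i)"
    by (simp add: cong_0_iff[symmetric] cong_def)
  moreover have "q dvd a - 1"
    using assms(2) by (simp add: cong_iff_dvd_diff)
  ultimately have "int p * q dvd (a - 1) * (\<Sum>i<p. a ^ i)"
    by (metis mult.commute mult_dvd_mono)
  then show ?thesis
    by (simp add: cong_iff_dvd_diff power_diff_1_eq)
qed

lemma cong_power_if_cong_exponent: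
  fixes a n :: nat
  assumes "[a ^ d = 1] (mod n)" and "[e = e'] (mod d)"
  shows "[a ^ e = a ^ e'] (mod n)"
proof -
  have "[a ^ e = a ^ (e + d * k)] (mod n)" for e k
  proof -
    have "[a ^ e * (a ^ d) ^ k = a ^ e * 1 ^ k] (mod n)"
      by (intro cong_mult cong_pow assms(1) cong_refl)
    then show ?thesis
      by (simp add: power_add power_mult cong_sym)
  qed
  moreover have "\<exists>k. e' = e + d * k" if "e \<le> e'" "[e = e'] (mod d)" for e e'
    using that by (metis cong_le_nat cong_sym add.commute mult.commute)
  ultimately show ?thesis
    using assms(2) by (metis cong_sym nat_le_linear)
qed

lemma three_pow_4_10_pow_cong_one:
  "[(3::nat) ^ (4 * 10 ^ m) = 1] (mod 4 * 10 ^ Suc m)"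
proof -
  have "[(3::int) ^ (4 * 10 ^ m) = 1] (mod 4 * 10 ^ Suc m)"
  proof (induction m)
    case 0
    show ?case by (simp add: cong_def)
  next
    case (Suc m)
    then have "[((3::int) ^ (4 * 10 ^ m)) ^ 10 = 1] (mod int 10 * (4 * 10 ^ Suc m))"
      by (intro cong_one_power_lift) simp_all
    moreover have "((3::int) ^ (4 * 10 ^ m)) ^ 10 = 3 ^ (4 * 10 ^ Suc m)"
      by (simp flip: power_mult)
    ultimately show ?case
      by (simp add: ac_simps)
  qed
  then show ?thesis
    by (simp flip: cong_int_iff)
qed

fun tower3 :: "nat \<Rightarrow> nat" where
  "tower3 0 = 3"
| "tower3 (Suc j) = 3 ^ tower3 j"

lemma uparrow_Suc_Suc:
  assumes "1 \<le> k" and "1 \<le> b"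
  shows "uparrow a (Suc k) (Suc b) = uparrow a k (uparrow a (Suc k) b)"
  using assms by (cases k; cases b) simp_all

lemma uparrow_Suc_one: "1 \<le> k \<Longrightarrow> uparrow a (Suc k) 1 = a"
  by (cases k) simp_all

lemma uparrow_3_2_eq_tower3: "uparrow 3 2 (Suc j) = tower3 j"
  by (induction j) (simp_all add: numeral_2_eq_2)

lemma tower3_ge: "j + 3 \<le> tower3 j"
proof (induction j)
  case (Suc j)
  have "tower3 j < 3 ^ tower3 j"
    using less_exp[of "tower3 j"] power_mono[of "2::nat" 3 "tower3 j"] by linarith
  with Suc show ?case by simp
qed simp

lemma tower3_cong_3_mod_4: "[tower3 j = 3] (mod 4)"
proof (cases j)
  case (Suc i)
  have "odd (tower3 i)"
    by (cases i) simp_all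
  then have "[tower3 i = 1] (mod 2)"
    by (simp add: cong_def odd_iff_mod_2_eq_one)
  then have "[3 ^ tower3 i = 3 ^ 1] (mod (4::nat))"
    by (rule cong_power_if_cong_exponent[rotated]) (simp add: cong_def)
  then show ?thesis
    by (simp add: Suc)
qed simp

lemma tower3_Suc_cong: "m \<le> j \<Longrightarrow> [tower3 (Suc j) = tower3 j] (mod 4 * 10 ^ m)"
proof (induction m arbitrary: j)
  case 0
  show ?case
    by (simp del: tower3.simps) (metis cong_sym cong_trans tower3_cong_3_mod_4)
next
  case (Suc m)
  then obtain i where j: "j = Suc i" and "m \<le> i"
    by (cases j) simp_all
  then have "[tower3 (Suc i) = tower3 i] (mod 4 * 10 ^ m)"
    using Suc.IH by blast
  then have "[3 ^ tower3 (Suc i) = 3 ^ tower3 i] (mod (4 * 10 ^ Suc m :: nat))"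
    by (rule cong_power_if_cong_exponent[OF three_pow_4_10_pow_cong_one])
  then show ?case
    by (simp add: j)
qed

lemma tower3_mod_10_pow_stable:
  assumes "m \<le> j"
  shows "tower3 j mod 10 ^ m = tower3 m mod 10 ^ m"
  using assms
proof (induction j rule: dec_induct)
  case (step j)
  have "[tower3 (Suc j) = tower3 j] (mod 10 ^ m)"
    using tower3_Suc_cong[OF step.hyps(1)] by (rule cong_dvd_modulus_nat) simp
  with step.IH show ?case
    by (simp add: cong_def)
qed simp

lemma uparrow_3_eq_tower3:
  assumes "2 \<le> k" and "2 \<le> b"
  shows "\<exists>h. uparrow 3 k b = tower3 h \<and> k + b \<le> h + 3"
  using assms
proof (induction k arbitrary: b rule: nat_induct_at_least)
  case base
  then have "uparrow 3 2 b = tower3 (b - 1)"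
    using uparrow_3_2_eq_tower3[of "b - 1"] by simp
  then show ?case
    using base by fastforce
next
  case (Suc k)
  have tower_k: "\<exists>h. uparrow 3 k c = tower3 h \<and> k + c \<le> h + 3" if "2 \<le> c" for c
    using Suc.IH that .
  show ?case
    using \<open>2 \<le> b\<close>
  proof (induction b rule: nat_induct_at_least)
    case base
    have "uparrow 3 (Suc k) 2 = uparrow 3 k 3"
      using \<open>2 \<le> k\<close> uparrow_Suc_Suc[of k 1 3] uparrow_Suc_one[of k 3] by (simp add: numeral_2_eq_2)
    then show ?case
      using tower_k[of 3] by fastforce
  next
    case (Suc b)
    then obtain h where h: "uparrow 3 (Suc k) b = tower3 h" "Suc k + b \<le> h + 3"
      by blast
    have "h + 3 \<le> tower3 h"
      by (rule tower3_ge)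
    then obtain h' where h': "uparrow 3 k (tower3 h) = tower3 h'" "k + tower3 h \<le> h' + 3"
      using tower_k[of "tower3 h"] by auto
    have "uparrow 3 (Suc k) (Suc b) = tower3 h'"
      using Suc.hyps \<open>2 \<le> k\<close> by (simp add: uparrow_Suc_Suc h(1) h'(1))
    then show ?case
      using \<open>2 \<le> k\<close> h(2) h'(2) \<open>h + 3 \<le> tower3 h\<close> by (intro exI[of _ h']) auto
  qed
qed

lemma graham_eq_tower3: "\<exists>h. graham (Suc i) = tower3 h \<and> i \<le> h"
proof (induction i)
  case 0
  have "graham (Suc 0) = uparrow 3 4 3"
    by (simp only: graham.simps)
  then show ?case
    using uparrow_3_eq_tower3[of 4 3] by (auto simp del: uparrow.simps)
next
  case (Suc i)
  then obtain h where h: "graham (Suc i) = tower3 h" "i \<le> h"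
    by blast
  have "h + 3 \<le> tower3 h"
    by (rule tower3_ge)
  then obtain h' where "uparrow 3 (tower3 h) 3 = tower3 h'" "tower3 h + 3 \<le> h' + 3"
    using uparrow_3_eq_tower3[of "tower3 h" 3] by auto
  then show ?case
    using h \<open>h + 3 \<le> tower3 h\<close> by auto
qed

lemma graham_mod_10_pow_stable:
  assumes "m \<le> i"
  shows "graham (Suc i) mod 10 ^ m = tower3 m mod 10 ^ m"
proof -
  obtain h where "graham (Suc i) = tower3 h" "i \<le> h"
    using graham_eq_tower3 by blast
  then show ?thesis
    using assms tower3_mod_10_pow_stable[of m h] by simp
qed

theorem mainTheorem5:
  shows "converges_10adic (\<lambda>i. graham (Suc i))
       \<and> converges_10adic (\<lambda>j. uparrow 3 2 (Suc j))
       \<and> lim_10adic (\<lambda>i. graham (Suc i)) = lim_10adic (\<lambda>j. uparrow 3 2 (Suc j))"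
proof -
  have "converges_10adic (\<lambda>i. graham (Suc i))
      \<and> lim_10adic (\<lambda>i. graham (Suc i)) = (\<lambda>m. tower3 m mod 10 ^ m)"
    by (rule converges_10adic_with_limit) (blast intro: graham_mod_10_pow_stable)
  moreover have "converges_10adic (\<lambda>j. uparrow 3 2 (Suc j))
      \<and> lim_10adic (\<lambda>j. uparrow 3 2 (Suc j)) = (\<lambda>m. tower3 m mod 10 ^ m)"
    unfolding uparrow_3_2_eq_tower3
    by (rule converges_10adic_with_limit) (blast intro: tower3_mod_10_pow_stable)
  ultimately show ?thesis
    by simp
qed

end
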